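(* For $k\in\mathbb N_0$ and real $\alpha\ge0$ let $S^{(\alpha)}_k=\sum_{p\in\mathbb P_k}p^{-\alpha}$, where $\mathbb P_k=\{p^{(k)}_n:n\in\mathbb N\}$. The series $S^{(\alpha)}_k$ converges if and only if $\alpha>1$, or $\alpha=1$ and $k\ge2$. Moreover, for each $\alpha\ge1$, $S^{(\alpha)}_k\to0$ as $k\to+\infty$.
   Context: Let $p_n$ denote the $n$-th prime number. Define $p^{(0)}_n=n$ and recursively $p^{(k+1)}_n=p_{p^{(k)}_n}$ for $k\in\mathbb N_0$. *)

theory Defs
  imports "HOL-Analysis.Analysis" "HOL-Computational_Algebra.Primes" "HOL-Library.Infinite_Set"
begin

text \<open>The n-th prime, 1-indexed: nth_prime 1 = 2, nth_prime 2 = 3, ...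
  (the value at 0 is irrelevant and never used).\<close>
definition nth_prime :: "nat \<Rightarrow> nat" where
  "nth_prime n = enumerate {p::nat. prime p} (n - 1)"

definition iter_prime :: "nat \<Rightarrow> nat \<Rightarrow> nat" where
  "iter_prime k n = (nth_prime ^^ k) n"

definition prime_level_set :: "nat \<Rightarrow> nat set" where
  "prime_level_set k = iter_prime k ` {1..}"

end

theory Submission
  imports Defs "HOL-Number_Theory.Prime_Powers"
begin

text \<open>Chebyshev's elementary estimates, read off from the prime factorisation of the central
  binomial coefficient, give \<open>c n log n \<le> p_n \<le> C n log n\<close>. Applying the lower bound twice
  gives \<open>p_{p_n} \<ge> c' n (log n)^2\<close>, so the sum of \<open>1/p\<close> over \<open>P_2\<close> converges; since
  \<open>P_k \<subseteq> P_2 \<inter> [k, \<infinity>)\<close> for \<open>k \<ge> 2\<close>, the sums over \<open>P_k\<close> converge for \<open>\<alpha> \<ge> 1\<close>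
  and are bounded by tails of one convergent series. Conversely \<open>p_n \<le> C n log n\<close> makes the
  sum of \<open>1/p\<close> diverge over \<open>P_1 \<subseteq> P_0\<close>, and \<open>p^(k)_n \<le> C n^b\<close> for every \<open>b > 1\<close>
  makes the sum of \<open>p^(-\<alpha>)\<close> diverge over every \<open>P_k\<close> when \<open>\<alpha> < 1\<close>.\<close>

section \<open>Chebyshev's function \<open>\<psi>\<close>\<close>

definition chebyshev_psi :: "nat \<Rightarrow> real" where
  "chebyshev_psi N = (\<Sum>d\<in>{1..N}. mangoldt d)"

lemma chebyshev_psi_mono: "M \<le> N \<Longrightarrow> chebyshev_psi M \<le> chebyshev_psi N"
  unfolding chebyshev_psi_def by (intro sum_mono2 mangoldt_nonneg) auto

lemma card_multiples_atLeastAtMost: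
  assumes "d > 0"
  shows "card {k\<in>{1..n::nat}. d dvd k} = n div d"
proof -
  have "{k\<in>{1..n}. d dvd k} = (\<lambda>j. d * j) ` {1..n div d}"
  proof (intro subset_antisym subsetI)
    fix k assume "k \<in> {k\<in>{1..n}. d dvd k}"
    then obtain j where "k = d * j" "1 \<le> d * j" "d * j \<le> n" by auto
    moreover from this have "1 \<le> j" by (cases j) auto
    ultimately show "k \<in> (\<lambda>j. d * j) ` {1..n div d}"
      using assms by (auto simp: less_eq_div_iff_mult_less_eq mult.commute)
  next
    fix k assume "k \<in> (\<lambda>j. d * j) ` {1..n div d}"
    then obtain j where "k = d * j" "1 \<le> j" "j * d \<le> n"
      using assms by (auto simp: less_eq_div_iff_mult_less_eq)
    then show "k \<in> {k\<in>{1..n}. d dvd k}"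
      using assms by (auto simp: mult.commute intro: order.trans[OF _ mult_le_mono2])
  qed
  also have "card \<dots> = n div d"
    using assms by (subst card_image) (auto simp: inj_on_def)
  finally show ?thesis .
qed

lemma ln_fact_conv_sum_mangoldt:
  assumes "n \<le> N"
  shows "ln (fact n :: real) = (\<Sum>d\<in>{1..N}. mangoldt d * real (n div d))"
proof -
  have "ln (fact n :: real) = (\<Sum>k\<in>{1..n}. ln (real k))"
    by (simp add: fact_prod) (subst ln_prod, auto)
  also have "\<dots> = (\<Sum>k\<in>{1..n}. \<Sum>d\<in>{d\<in>{1..n}. d dvd k}. (mangoldt d :: real))"
  proof (intro sum.cong refl)
    fix k assume k: "k \<in> {1..n}"
    have "{d\<in>{1..n}. d dvd k} = {d. d dvd k}"
      using k by (auto dest: dvd_imp_le)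
    then show "ln (real k) = (\<Sum>d\<in>{d\<in>{1..n}. d dvd k}. (mangoldt d :: real))"
      using k mangoldt_sum[of k, where 'a = real] by simp
  qed
  also have "\<dots> = (\<Sum>d\<in>{1..n}. \<Sum>k\<in>{k\<in>{1..n}. d dvd k}. (mangoldt d :: real))"
    by (rule sum.swap_restrict) auto
  also have "\<dots> = (\<Sum>d\<in>{1..n}. mangoldt d * real (n div d))"
  proof (intro sum.cong refl)
    fix d assume "d \<in> {1..n}"
    then show "(\<Sum>k\<in>{k\<in>{1..n}. d dvd k}. (mangoldt d :: real)) = mangoldt d * real (n div d)"
      using card_multiples_atLeastAtMost[of d n] by simp
  qed
  also have "\<dots> = (\<Sum>d\<in>{1..N}. mangoldt d * real (n div d))"
    using assms by (intro sum.mono_neutral_left) auto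
  finally show ?thesis .
qed

lemma ln_central_binomial_conv_sum_mangoldt:
  "ln (real ((2 * m) choose m)) =
     (\<Sum>d\<in>{1..2 * m}. mangoldt d * (real ((2 * m) div d) - 2 * real (m div d)))"
proof -
  have "real ((2 * m) choose m) = fact (2 * m) / (fact m * fact m)"
    using binomial_fact[of m "2 * m", where 'a = real] by (simp add: mult_2)
  then have "ln (real ((2 * m) choose m)) = ln (fact (2 * m)) - 2 * ln (fact m :: real)"
    by (simp add: ln_div ln_mult)
  also have "\<dots> = (\<Sum>d\<in>{1..2 * m}. mangoldt d * real ((2 * m) div d))
                   - 2 * (\<Sum>d\<in>{1..2 * m}. mangoldt d * real (m div d))"
    using ln_fact_conv_sum_mangoldt[of "2 * m" "2 * m"] ln_fact_conv_sum_mangoldt[of m "2 * m"]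
    by simp
  also have "\<dots> = (\<Sum>d\<in>{1..2 * m}. mangoldt d * (real ((2 * m) div d) - 2 * real (m div d)))"
    by (simp add: sum_distrib_left sum_subtractf algebra_simps)
  finally show ?thesis .
qed

lemma double_div_bounds:
  fixes d m :: nat
  assumes "d > 0"
  shows "2 * (m div d) \<le> (2 * m) div d" "(2 * m) div d \<le> 2 * (m div d) + 1"
proof -
  have "2 * m = 2 * (m mod d) + 2 * (m div d) * d"
    by (metis div_mult_mod_eq distrib_left mult.assoc add.commute)
  then have "(2 * m) div d = 2 * (m div d) + (2 * (m mod d)) div d"
    using assms by (metis div_mult_self1 not_gr0)
  moreover have "(2 * (m mod d)) div d < 2"
    using assms by (simp add: div_less_iff_less_mult)
  ultimately show "2 * (m div d) \<le> (2 * m) div d" "(2 * m) div d \<le> 2 * (m div d) + 1"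
    by linarith+
qed

lemma ln_central_binomial_le_chebyshev_psi:
  "ln (real ((2 * m) choose m)) \<le> chebyshev_psi (2 * m)"
  unfolding ln_central_binomial_conv_sum_mangoldt chebyshev_psi_def
proof (intro sum_mono)
  fix d assume "d \<in> {1..2 * m}"
  then have "real ((2 * m) div d) - 2 * real (m div d) \<le> 1"
    using double_div_bounds(2)[of d m] by simp
  then show "mangoldt d * (real ((2 * m) div d) - 2 * real (m div d)) \<le> mangoldt d"
    using mangoldt_nonneg[of d] by (simp add: mult_left_le)
qed

lemma chebyshev_psi_double_le:
  "chebyshev_psi (2 * m) \<le> chebyshev_psi m + ln (real ((2 * m) choose m))"
proof -
  define c where "c d = real ((2 * m) div d) - 2 * real (m div d)" for d
  have split: "{1..2 * m} = {1..m} \<union> {m<..2 * m}" by auto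
  have "chebyshev_psi (2 * m) = chebyshev_psi m + (\<Sum>d\<in>{m<..2 * m}. mangoldt d)"
    unfolding chebyshev_psi_def split by (rule sum.union_disjoint) auto
  also have "(\<Sum>d\<in>{m<..2 * m}. mangoldt d) = (\<Sum>d\<in>{m<..2 * m}. mangoldt d * c d)"
  proof (intro sum.cong refl)
    fix d assume "d \<in> {m<..2 * m}"
    then have "m div d = 0" "(2 * m) div d = 1"
      by (auto intro: div_nat_eqI)
    then show "mangoldt d = mangoldt d * c d" by (simp add: c_def)
  qed
  also have "\<dots> \<le> (\<Sum>d\<in>{1..2 * m}. mangoldt d * c d)"
  proof (intro sum_mono2)
    fix d assume "d \<in> {1..2 * m} - {m<..2 * m}"
    then show "0 \<le> mangoldt d * c d"
      using double_div_bounds(1)[of d m] by (simp add: c_def mangoldt_nonneg)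
  qed auto
  also have "\<dots> = ln (real ((2 * m) choose m))"
    by (simp add: c_def ln_central_binomial_conv_sum_mangoldt)
  finally show ?thesis by simp
qed

lemma chebyshev_psi_double_le_linear:
  "chebyshev_psi (2 * m) \<le> chebyshev_psi m + real m * ln 4"
proof -
  have "real ((2 * m) choose m) \<le> 4 ^ m"
    using binomial_le_pow2[of "2 * m" m] by (simp add: power_mult flip: of_nat_le_iff)
  then have "ln (real ((2 * m) choose m)) \<le> ln (4 ^ m)"
    by (intro ln_mono) simp_all
  then show ?thesis
    using chebyshev_psi_double_le[of m] by (simp add: ln_realpow)
qed

lemma chebyshev_psi_le_linear: "chebyshev_psi N \<le> 3 * ln 4 * real N"
proof (induction N rule: less_induct)
  case (less N)
  show ?case
  proof (cases "N \<ge> 2")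
    case False
    then have "N = 0 \<or> N = 1" by linarith
    then have "chebyshev_psi N = 0"
      by (auto simp: chebyshev_psi_def)
    then show ?thesis by simp
  next
    case True
    define m where "m = (N + 1) div 2"
    have "N \<le> 2 * m" "m < N" "4 * m \<le> 3 * N"
      using True by (auto simp: m_def)
    have "chebyshev_psi N \<le> chebyshev_psi (2 * m)"
      using \<open>N \<le> 2 * m\<close> by (rule chebyshev_psi_mono)
    also have "\<dots> \<le> 3 * ln 4 * real m + real m * ln 4"
      using chebyshev_psi_double_le_linear[of m] less.IH[OF \<open>m < N\<close>] by linarith
    also have "\<dots> = ln 4 * real (4 * m)" by simp
    also have "\<dots> \<le> ln 4 * real (3 * N)"
      using \<open>4 * m \<le> 3 * N\<close> by (intro mult_left_mono) simp_all
    finally show ?thesis by simp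
  qed
qed

lemma prime_power_exponents_subset:
  assumes "prime p"
  shows "{k. p ^ Suc k \<le> N} \<subseteq> {..<nat \<lfloor>ln (real N) / ln (real p)\<rfloor>}"
proof
  fix k assume "k \<in> {k. p ^ Suc k \<le> N}"
  then have "real p ^ Suc k \<le> real N"
    by (metis mem_Collect_eq of_nat_le_iff of_nat_power)
  then have "ln (real p ^ Suc k) \<le> ln (real N)"
    using prime_gt_0_nat[OF assms] by (intro ln_mono) simp_all
  then have "real (Suc k) * ln (real p) \<le> ln (real N)"
    by (simp only: ln_realpow)
  moreover have "ln (real p) > 0"
    using prime_gt_1_nat[OF assms] by simp
  ultimately have "real (Suc k) \<le> ln (real N) / ln (real p)"
    by (simp add: pos_le_divide_eq del: of_nat_Suc)
  then show "k \<in> {..<nat \<lfloor>ln (real N) / ln (real p)\<rfloor>}"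
    unfolding lessThan_iff zless_nat_eq_int_zless less_floor_iff by simp
qed

lemma card_prime_power_exponents_le:
  assumes "prime p" "N \<ge> 1"
  shows "real (card {k. p ^ Suc k \<le> N}) * ln (real p) \<le> ln (real N)"
proof -
  define B where "B = ln (real N) / ln (real p)"
  have ln_p: "ln (real p) > 0"
    using prime_gt_1_nat[OF assms(1)] by simp
  have "B \<ge> 0"
    using assms(2) ln_p by (simp add: B_def)
  have "card {k. p ^ Suc k \<le> N} \<le> nat \<lfloor>B\<rfloor>"
    using card_mono[OF finite_lessThan prime_power_exponents_subset[OF assms(1)]]
    by (simp add: B_def)
  also have "real (nat \<lfloor>B\<rfloor>) \<le> B"
    using \<open>B \<ge> 0\<close> by (metis of_nat_nat zero_le_floor of_int_floor_le)
  finally show ?thesis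
    using ln_p by (simp add: B_def pos_le_divide_eq)
qed

lemma chebyshev_psi_le_card_primes:
  "chebyshev_psi N \<le> real (card {p. prime p \<and> p \<le> N}) * ln (real N)"
proof (cases "N \<ge> 1")
  case False
  then have "N = 0" by simp
  then show ?thesis by (simp add: chebyshev_psi_def)
next
  case True
  define P where "P = {p. prime p \<and> p \<le> N}"
  define A where "A = Sigma P (\<lambda>p. {k. p ^ Suc k \<le> N})"
  define pow :: "nat \<times> nat \<Rightarrow> nat" where "pow = (\<lambda>(p, k). p ^ Suc k)"
  have fin_exps: "finite {k. p ^ Suc k \<le> N}" if "prime p" for p
    using prime_power_exponents_subset[OF that] by (rule finite_subset) simp
  have fin_A: "finite A"
    unfolding A_def P_def using fin_exps by (intro finite_SigmaI) auto
  have "chebyshev_psi N = (\<Sum>d\<in>{d\<in>{1..N}. primepow d}. mangoldt d)"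
    unfolding chebyshev_psi_def by (intro sum.mono_neutral_right) (auto simp: mangoldt_def)
  also have "\<dots> \<le> (\<Sum>d\<in>pow ` A. mangoldt d)"
  proof (intro sum_mono2 mangoldt_nonneg subsetI)
    fix d assume "d \<in> {d\<in>{1..N}. primepow d}"
    then obtain p j where "prime p" "d = p ^ Suc j" "d \<le> N"
      by (auto simp: primepow_def dest!: gr0_implies_Suc)
    moreover from this have "p \<le> d"
      using self_le_power[OF prime_ge_1_nat[of p]] by blast
    ultimately show "d \<in> pow ` A"
      by (auto simp: A_def P_def pow_def simp del: power_Suc intro!: image_eqI[of _ _ "(p, j)"])
  qed (use fin_A in auto)
  also have "\<dots> \<le> (\<Sum>pk\<in>A. mangoldt (pow pk))"
    using sum_image_le[OF fin_A, of "mangoldt :: nat \<Rightarrow> real" pow]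
    by (simp add: mangoldt_nonneg o_def)
  also have "\<dots> = (\<Sum>(p, k)\<in>A. ln (real p))"
    by (intro sum.cong) (auto simp: A_def P_def pow_def simp del: power_Suc)
  also have "\<dots> = (\<Sum>p\<in>P. real (card {k. p ^ Suc k \<le> N}) * ln (real p))"
    unfolding A_def using fin_exps by (subst sum.Sigma[symmetric]) (auto simp: P_def)
  also have "\<dots> \<le> (\<Sum>p\<in>P. ln (real N))"
    using True by (intro sum_mono card_prime_power_exponents_le) (auto simp: P_def)
  finally show ?thesis by (simp add: P_def)
qed

lemma card_primes_lower_bound:
  assumes "1 \<le> m"
  shows "real m * ln 4 \<le> (real (card {p. prime p \<and> p \<le> 2 * m}) + 1) * ln (2 * real m)"
proof -
  have "real m * ln 4 - ln (2 * real m) = ln (4 ^ m / (2 * real m))"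
    using assms by (simp add: ln_div ln_realpow)
  also have "\<dots> \<le> ln (real ((2 * m) choose m))"
    using central_binomial_lower_bound[of m] assms by (intro ln_mono) simp_all
  also have "\<dots> \<le> chebyshev_psi (2 * m)"
    by (rule ln_central_binomial_le_chebyshev_psi)
  also have "\<dots> \<le> real (card {p. prime p \<and> p \<le> 2 * m}) * ln (2 * real m)"
    using chebyshev_psi_le_card_primes[of "2 * m"] by simp
  finally show ?thesis
    by (simp add: algebra_simps)
qed

section \<open>Bounds for the \<open>n\<close>-th prime\<close>

lemma prime_nth_prime: "prime (nth_prime n)"
  using enumerate_in_set[OF primes_infinite] by (simp add: nth_prime_def)

lemma nth_prime_less_iff: "1 \<le> m \<Longrightarrow> 1 \<le> n \<Longrightarrow> nth_prime m < nth_prime n \<longleftrightarrow> m < n"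
  using primes_infinite by (simp add: nth_prime_def) arith

lemma nth_prime_mono: "1 \<le> m \<Longrightarrow> m \<le> n \<Longrightarrow> nth_prime m \<le> nth_prime n"
  using nth_prime_less_iff[of m n] by (cases "m = n") auto

lemma strict_mono_on_nth_prime: "strict_mono_on {1..} nth_prime"
  by (rule strict_mono_onI) (simp add: nth_prime_less_iff)

lemma nth_prime_ge: "1 \<le> n \<Longrightarrow> n + 1 \<le> nth_prime n"
proof (induction n rule: nat_induct_at_least)
  case base
  then show ?case using prime_ge_2_nat[OF prime_nth_prime[of 1]] by simp
next
  case (Suc n)
  then show ?case using nth_prime_less_iff[of n "Suc n"] by simp
qed

lemma nth_prime_surj: "prime p \<Longrightarrow> \<exists>n\<ge>1. nth_prime n = p"
  using enumerate_Ex[OF primes_infinite, of p] by (auto simp: nth_prime_def intro: exI[of _ "Suc _"])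

lemma card_primes_le_less_nth_prime:
  assumes "1 \<le> n" "N < nth_prime n"
  shows "card {p. prime p \<and> p \<le> N} < n"
proof -
  have "{p. prime p \<and> p \<le> N} \<subseteq> nth_prime ` {1..<n}"
  proof
    fix p assume p: "p \<in> {p. prime p \<and> p \<le> N}"
    then obtain i where i: "i \<ge> 1" "nth_prime i = p"
      using nth_prime_surj by blast
    then have "nth_prime i < nth_prime n"
      using p assms(2) by simp
    then have "i < n"
      using nth_prime_less_iff i(1) assms(1) by blast
    with i show "p \<in> nth_prime ` {1..<n}" by auto
  qed
  then have "card {p. prime p \<and> p \<le> N} \<le> card (nth_prime ` {1..<n})"
    by (intro card_mono) auto
  also have "\<dots> < n"
    using card_image_le[of "{1..<n}" nth_prime] assms(1) by simp
  finally show ?thesis .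
qed

lemma sum_ln_nth_prime_le_chebyshev_psi:
  "(\<Sum>i\<in>{1..n}. ln (real (nth_prime i))) \<le> chebyshev_psi (nth_prime n)"
proof -
  have inj: "inj_on nth_prime {1..n}"
    using strict_mono_on_imp_inj_on[OF strict_mono_on_nth_prime] by (rule inj_on_subset) auto
  have "(\<Sum>i\<in>{1..n}. ln (real (nth_prime i))) = (\<Sum>p\<in>nth_prime ` {1..n}. mangoldt p)"
    by (subst sum.reindex[OF inj]) (simp add: prime_nth_prime)
  also have "\<dots> \<le> chebyshev_psi (nth_prime n)"
    unfolding chebyshev_psi_def
  proof (intro sum_mono2 mangoldt_nonneg)
    show "nth_prime ` {1..n} \<subseteq> {1..nth_prime n}"
      using nth_prime_ge nth_prime_mono by fastforce
  qed auto
  finally show ?thesis .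
qed

lemma nth_prime_lower_bound:
  assumes "1 \<le> n"
  shows "real n * ln (real n + 2) \<le> 12 * ln 4 * real (nth_prime n)"
proof -
  define q where "q = n div 2"
  have "real n + 2 \<le> 4 * real q + 4"
    unfolding q_def by linarith
  also have "\<dots> \<le> (real q + 2) ^ 2"
    by (simp add: power2_eq_square algebra_simps)
  finally have "real n + 2 \<le> (real q + 2) ^ 2" .
  then have "ln (real n + 2) \<le> ln ((real q + 2) ^ 2)"
    by (intro ln_mono) simp_all
  also have "\<dots> = 2 * ln (real q + 2)"
    by (simp add: ln_realpow)
  finally have "ln (real n + 2) \<le> 2 * ln (real q + 2)" .
  moreover have "real n \<le> 2 * real (n - q)"
    unfolding q_def by linarith
  ultimately have "real n * ln (real n + 2) \<le> (2 * real (n - q)) * (2 * ln (real q + 2))"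
    by (intro mult_mono) simp_all
  also have "\<dots> = 4 * (real (n - q) * ln (real q + 2))"
    by simp
  also have "real (n - q) * ln (real q + 2) = (\<Sum>i\<in>{q<..n}. ln (real q + 2))"
    by simp
  also have "\<dots> \<le> (\<Sum>i\<in>{q<..n}. ln (real (nth_prime i)))"
  proof (intro sum_mono)
    fix i assume "i \<in> {q<..n}"
    then have "real q + 2 \<le> real (nth_prime i)"
      using nth_prime_ge[of i] by simp
    then show "ln (real q + 2) \<le> ln (real (nth_prime i))"
      by (intro ln_mono) simp_all
  qed
  also have "\<dots> \<le> (\<Sum>i\<in>{1..n}. ln (real (nth_prime i)))"
    by (intro sum_mono2) (auto intro!: ln_ge_zero simp: Suc_le_eq prime_gt_0_nat prime_nth_prime)
  also have "\<dots> \<le> 3 * ln 4 * real (nth_prime n)"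
    using sum_ln_nth_prime_le_chebyshev_psi chebyshev_psi_le_linear by (rule order.trans)
  finally show ?thesis by simp
qed

lemma mult_ln_4_le_if_double_less_nth_prime:
  assumes "1 \<le> m" "1 \<le> n" "2 * m < nth_prime n"
  shows "real m * ln 4 \<le> real n * ln (2 * real m)"
proof -
  have "card {p. prime p \<and> p \<le> 2 * m} + 1 \<le> n"
    using card_primes_le_less_nth_prime[OF assms(2,3)] by simp
  then have card: "real (card {p. prime p \<and> p \<le> 2 * m}) + 1 \<le> real n"
    using of_nat_le_iff[of "card {p. prime p \<and> p \<le> 2 * m} + 1" n] by simp
  have "real m * ln 4 \<le> (real (card {p. prime p \<and> p \<le> 2 * m}) + 1) * ln (2 * real m)"
    using assms(1) by (rule card_primes_lower_bound)
  also have "\<dots> \<le> real n * ln (2 * real m)"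
    using card assms(1) by (intro mult_right_mono) simp_all
  finally show ?thesis .
qed

lemma nth_prime_minus_two_le:
  assumes "1 \<le> n"
  shows "(real (nth_prime n) - 2) * ln 2 \<le> real n * ln (real (nth_prime n))"
proof -
  define x where "x = nth_prime n"
  define m where "m = (x - 1) div 2"
  have "x \<ge> 2"
    using nth_prime_ge[OF assms] assms by (simp add: x_def)
  show ?thesis
  proof (cases "m = 0")
    case True
    then have "x = 2"
      using \<open>x \<ge> 2\<close> by (simp add: m_def)
    then show ?thesis
      using assms by (simp add: x_def [symmetric])
  next
    case False
    have "2 * real m \<le> real x" "real x - 2 \<le> 2 * real m"
      unfolding m_def by linarith+
    have "2 * m < nth_prime n"
      using \<open>x \<ge> 2\<close> unfolding m_def x_def [symmetric] by presburger
    have "(real x - 2) * ln 2 \<le> 2 * real m * ln 2"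
      using \<open>real x - 2 \<le> 2 * real m\<close> by (intro mult_right_mono) simp_all
    also have "\<dots> = real m * ln 4"
      using ln_realpow[of 2 2] by simp
    also have "\<dots> \<le> real n * ln (2 * real m)"
      using False assms \<open>2 * m < nth_prime n\<close>
      by (intro mult_ln_4_le_if_double_less_nth_prime) simp_all
    also have "\<dots> \<le> real n * ln (real x)"
      using False \<open>2 * real m \<le> real x\<close> by (intro mult_left_mono ln_mono) simp_all
    finally show ?thesis
      by (simp add: x_def)
  qed
qed

lemma le_mult_ln_imp_le_square:
  fixes x n L :: real
  assumes "x \<ge> 2" "n \<ge> 1" "L > 0" and le: "(x - 2) * L \<le> n * ln x"
  shows "x \<le> (n * (2 / L + 2)) ^ 2"
proof -
  define s where "s = sqrt x"
  have "s \<ge> 1" "x = s ^ 2"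
    using assms(1) by (auto simp: s_def)
  have "ln x = 2 * ln s"
    using assms(1) by (simp add: s_def ln_sqrt)
  also have "\<dots> \<le> 2 * s"
    using \<open>s \<ge> 1\<close> ln_le_minus_one[of s] by simp
  finally have "n * ln x \<le> n * (2 * s)"
    using assms(2) by (intro mult_left_mono) simp_all
  with le have quadratic: "L * s ^ 2 - 2 * L \<le> 2 * n * s"
    unfolding \<open>x = s ^ 2\<close> by (simp add: algebra_simps)
  have "s \<le> 2 * n / L + 2"
  proof (rule ccontr)
    assume "\<not> ?thesis"
    then have "2 * n / L + 2 < s" by simp
    moreover have "2 * n / L \<ge> 0"
      using assms(2,3) by simp
    ultimately have "2 < s" "2 * L < L * s - 2 * n"
      using assms(3) by (linarith, simp add: field_simps)
    then have "2 * (2 * L) < s * (L * s - 2 * n)"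
      using assms(3) by (intro mult_strict_mono) simp_all
    with quadratic assms(3) show False
      by (simp add: algebra_simps power2_eq_square)
  qed
  also have "\<dots> \<le> n * (2 / L + 2)"
    using assms(2,3) by (simp add: field_simps)
  finally show ?thesis
    using \<open>s \<ge> 1\<close> \<open>x = s ^ 2\<close> by (simp add: power_mono)
qed

lemma ln_mult_le_const_mult_ln:
  fixes n K :: real
  assumes "n \<ge> 1" "K \<ge> 1"
  shows "ln (n * K) \<le> (1 + ln K / ln 3) * ln (n + 2)"
proof -
  have "ln 3 \<le> ln (n + 2)" "ln n \<le> ln (n + 2)"
    using assms(1) by simp_all
  have "ln K = ln K / ln 3 * ln 3"
    by simp
  also have "\<dots> \<le> ln K / ln 3 * ln (n + 2)"
    using \<open>ln 3 \<le> ln (n + 2)\<close> assms(2) by (intro mult_left_mono) simp_all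
  finally have "ln K \<le> ln K / ln 3 * ln (n + 2)" .
  have "ln (n * K) = ln n + ln K"
    using assms by (simp add: ln_mult)
  also have "\<dots> \<le> ln (n + 2) + ln K / ln 3 * ln (n + 2)"
    using \<open>ln n \<le> ln (n + 2)\<close> \<open>ln K \<le> ln K / ln 3 * ln (n + 2)\<close> by (rule add_mono)
  also have "\<dots> = (1 + ln K / ln 3) * ln (n + 2)"
    by (simp add: algebra_simps)
  finally show ?thesis .
qed

lemma le_mult_ln_imp_le_mult_ln:
  fixes x n L :: real
  assumes "x \<ge> 2" "n \<ge> 1" "L > 0" and le: "(x - 2) * L \<le> n * ln x"
  shows "x \<le> (2 / ln 3 + 2 * (1 + ln (2 / L + 2) / ln 3) / L) * n * ln (n + 2)"
proof -
  define K where "K = 2 / L + 2"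
  define A where "A = 1 + ln K / ln 3"
  define l where "l = ln (n + 2)"
  have "x \<le> (n * K) ^ 2"
    using le_mult_ln_imp_le_square[OF assms] by (simp add: K_def)
  then have "ln x \<le> ln ((n * K) ^ 2)"
    using assms(1) by (intro ln_mono) simp_all
  also have "\<dots> = 2 * ln (n * K)"
    by (simp add: ln_realpow)
  also have "\<dots> \<le> 2 * (A * l)"
    using ln_mult_le_const_mult_ln[of n K] assms(2,3) by (simp add: A_def K_def l_def)
  finally have "n * ln x \<le> n * (2 * (A * l))"
    using assms(2) by (intro mult_left_mono) simp_all
  with le have "x \<le> 2 + n * (2 * (A * l)) / L"
    using assms(3) by (simp add: field_simps)
  moreover have "2 \<le> 2 / ln 3 * (n * l)"
  proof -
    have "1 * ln 3 \<le> n * l"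
      using assms(2) by (intro mult_mono) (simp_all add: l_def)
    then have "2 / ln 3 * ln 3 \<le> 2 / ln 3 * (n * l)"
      by (intro mult_left_mono) simp_all
    then show ?thesis by simp
  qed
  moreover have "(2 / ln 3 + 2 * A / L) * n * l = 2 / ln 3 * (n * l) + n * (2 * (A * l)) / L"
    by (simp add: algebra_simps)
  ultimately show ?thesis
    unfolding K_def [symmetric] A_def [symmetric] l_def [symmetric] by linarith
qed

lemma nth_prime_upper_bound:
  "\<exists>C>0. \<forall>n\<ge>1. real (nth_prime n) \<le> C * real n * ln (real n + 2)"
proof (intro exI conjI allI impI)
  define K :: real where "K = 2 / ln 2 + 2"
  show "2 / ln 3 + 2 * (1 + ln K / ln 3) / ln 2 > 0"
    by (intro add_pos_nonneg divide_pos_pos) (simp_all add: K_def)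
  fix n :: nat assume "n \<ge> 1"
  then show "real (nth_prime n) \<le> (2 / ln 3 + 2 * (1 + ln K / ln 3) / ln 2) * real n * ln (real n + 2)"
    using le_mult_ln_imp_le_mult_ln[of "real (nth_prime n)" "real n" "ln 2"]
      nth_prime_minus_two_le nth_prime_ge[of n] by (simp add: K_def)
qed

lemma ln_le_powr_div:
  fixes x d :: real
  assumes "x > 0" "d > 0"
  shows "ln x \<le> x powr d / d"
proof -
  have "d * ln x = ln (x powr d)"
    using assms by (simp add: ln_powr)
  also have "\<dots> \<le> x powr d - 1"
    using assms by (intro ln_le_minus_one) simp
  finally show ?thesis
    using assms by (simp add: field_simps)
qed

lemma nth_prime_le_powr:
  assumes "b > 1"
  shows "\<exists>C>0. \<forall>n\<ge>1. real (nth_prime n) \<le> C * real n powr b"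
proof -
  obtain C where C: "C > 0" "\<And>n. n \<ge> 1 \<Longrightarrow> real (nth_prime n) \<le> C * real n * ln (real n + 2)"
    using nth_prime_upper_bound by blast
  define d where "d = b - 1"
  have "d > 0"
    using assms by (simp add: d_def)
  have "real (nth_prime n) \<le> (C * 3 powr d / d) * real n powr b" if "n \<ge> 1" for n
  proof -
    have "ln (real n + 2) \<le> (real n + 2) powr d / d"
      using \<open>d > 0\<close> by (intro ln_le_powr_div) simp_all
    also have "\<dots> \<le> (3 * real n) powr d / d"
      using \<open>d > 0\<close> that by (intro divide_right_mono powr_mono2) simp_all
    also have "\<dots> = 3 powr d * real n powr d / d"
      by (simp add: powr_mult)
    finally have "C * real n * ln (real n + 2) \<le> C * real n * (3 powr d * real n powr d / d)"
      using C(1) by (intro mult_left_mono) simp_all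
    also have "\<dots> = (C * 3 powr d / d) * (real n powr 1 * real n powr d)"
      using that by simp
    also have "real n powr 1 * real n powr d = real n powr b"
      unfolding powr_add [symmetric] d_def by simp
    finally show ?thesis
      using C(2)[OF that] by linarith
  qed
  moreover have "C * 3 powr d / d > 0"
    using C(1) \<open>d > 0\<close> by simp
  ultimately show ?thesis by blast
qed

section \<open>Iterated primes\<close>

lemma iter_prime_0 [simp]: "iter_prime 0 n = n"
  by (simp add: iter_prime_def)

lemma iter_prime_Suc [simp]: "iter_prime (Suc k) n = nth_prime (iter_prime k n)"
  by (simp add: iter_prime_def)

lemma iter_prime_add: "iter_prime (j + k) n = iter_prime j (iter_prime k n)"
  by (simp add: iter_prime_def funpow_add)

lemma iter_prime_ge: "1 \<le> n \<Longrightarrow> n + k \<le> iter_prime k n"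
proof (induction k)
  case (Suc k)
  then show ?case
    using nth_prime_ge[of "iter_prime k n"] by simp
qed simp

lemma strict_mono_on_iter_prime: "strict_mono_on {1..} (iter_prime k)"
proof (induction k)
  case 0
  then show ?case by (simp add: strict_mono_on_def)
next
  case (Suc k)
  show ?case
  proof (rule strict_mono_onI)
    fix m n :: nat assume "m \<in> {1..}" "n \<in> {1..}" "m < n"
    then have "iter_prime k m < iter_prime k n"
      using Suc.IH by (simp add: strict_mono_onD)
    moreover have "1 \<le> iter_prime k m"
      using iter_prime_ge[of m k] \<open>m \<in> {1..}\<close> by simp
    ultimately show "iter_prime (Suc k) m < iter_prime (Suc k) n"
      by (simp add: nth_prime_less_iff)
  qed
qed

lemma inj_on_iter_prime: "inj_on (iter_prime k) {1..}"
  by (rule strict_mono_on_imp_inj_on[OF strict_mono_on_iter_prime])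

lemma iter_prime_le_powr:
  "b > 1 \<Longrightarrow> \<exists>C>0. \<forall>n\<ge>1. real (iter_prime k n) \<le> C * real n powr b"
proof (induction k arbitrary: b)
  case 0
  have "real n \<le> 1 * real n powr b" if "n \<ge> 1" for n :: nat
    using powr_mono[of 1 b "real n"] 0 that by simp
  then show ?case by (intro exI[of _ 1]) auto
next
  case (Suc k)
  define c where "c = sqrt b"
  have "c > 1" "c * c = b"
    using Suc.prems by (simp_all add: c_def)
  obtain C1 where C1: "C1 > 0" "\<forall>n\<ge>1. real (iter_prime k n) \<le> C1 * real n powr c"
    using Suc.IH[OF \<open>c > 1\<close>] by blast
  obtain C2 where C2: "C2 > 0" "\<forall>n\<ge>1. real (nth_prime n) \<le> C2 * real n powr c"
    using nth_prime_le_powr[OF \<open>c > 1\<close>] by blast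
  have "real (iter_prime (Suc k) n) \<le> (C2 * C1 powr c) * real n powr b" if "n \<ge> 1" for n
  proof -
    have "1 \<le> iter_prime k n"
      using iter_prime_ge[OF that, of k] that by simp
    then have "real (iter_prime (Suc k) n) \<le> C2 * real (iter_prime k n) powr c"
      using C2(2) by simp
    also have "real (iter_prime k n) powr c \<le> (C1 * real n powr c) powr c"
      using C1(2) that \<open>c > 1\<close> by (intro powr_mono2) auto
    also have "(C1 * real n powr c) powr c = C1 powr c * real n powr b"
      using C1(1) \<open>c * c = b\<close> by (simp add: powr_mult powr_powr)
    finally show ?thesis
      using C2(1) by (simp add: mult_left_mono mult.assoc)
  qed
  moreover have "C2 * C1 powr c > 0"
    using C1(1) C2(1) by simp
  ultimately show ?case by blast
qed

lemma iter_prime_two_lower_bound: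
  assumes "1 \<le> n"
  shows "real n * ln (real n + 2) ^ 2 \<le> (12 * ln 4) ^ 2 * real (iter_prime 2 n)"
proof -
  define c :: real where "c = 12 * ln 4"
  define q where "q = nth_prime n"
  have "n + 1 \<le> q"
    using nth_prime_ge[OF assms] by (simp add: q_def)
  then have "ln (real n + 2) \<le> ln (real q + 2)"
    by (intro ln_mono) simp_all
  have "real n * ln (real n + 2) ^ 2 = (real n * ln (real n + 2)) * ln (real n + 2)"
    by (simp add: power2_eq_square)
  also have "\<dots> \<le> (c * real q) * ln (real q + 2)"
    by (rule mult_mono)
      (use nth_prime_lower_bound[OF assms] \<open>ln (real n + 2) \<le> ln (real q + 2)\<close>
        in \<open>simp_all add: c_def q_def\<close>)
  also have "\<dots> = c * (real q * ln (real q + 2))"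
    by simp
  also have "\<dots> \<le> c * (c * real (nth_prime q))"
    using nth_prime_lower_bound[of q] \<open>n + 1 \<le> q\<close> by (intro mult_left_mono) (simp_all add: c_def)
  finally show ?thesis
    by (simp add: c_def q_def numeral_2_eq_2 power2_eq_square)
qed

section \<open>Bertrand series and tails of infinite sums\<close>

lemma summable_on_atLeast_1_iff:
  fixes f :: "nat \<Rightarrow> real"
  assumes "\<And>n. f n \<ge> 0"
  shows "f summable_on {1..} \<longleftrightarrow> summable f"
proof -
  have "f summable_on {1..} \<longleftrightarrow> f summable_on insert 0 {1..}"
    by (rule summable_on_insert_iff [symmetric])
  also have "insert 0 {1..} = (UNIV :: nat set)"
    by auto
  finally show ?thesis
    using summable_on_UNIV_nonneg_real_iff[OF assms] by simp
qed

lemma ln_power_two_add_two_bounds: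
  "real j * ln 2 \<le> ln (2 ^ j + 2)" "ln (2 ^ j + 2) \<le> real (j + 2) * ln 2"
proof -
  show "real j * ln 2 \<le> ln (2 ^ j + 2)"
    using ln_mono[of "2 ^ j" "2 ^ j + 2"] by (simp add: ln_realpow)
  have "(2 :: real) ^ j + 2 \<le> 2 ^ (j + 2)"
    by (induction j) simp_all
  then show "ln (2 ^ j + 2) \<le> real (j + 2) * ln 2"
    by (subst ln_realpow [symmetric]) (intro ln_mono, simp_all)
qed

lemma summable_ln_power_two_add_two_powr_iff:
  fixes s :: real
  assumes "s \<ge> 0"
  shows "summable (\<lambda>j. ln (2 ^ j + 2) powr - s) \<longleftrightarrow> s > 1"
proof
  assume summable: "summable (\<lambda>j. ln (2 ^ j + 2) powr - s)"
  have "summable (\<lambda>j. ln 2 powr - s * real (j + 2) powr - s)"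
  proof (rule summable_comparison_test' [OF summable])
    fix j :: nat
    have "(1 :: real) < 2 ^ j + 2"
      using zero_le_power[of "2 :: real" j] by linarith
    have "ln 2 powr - s * real (j + 2) powr - s = (real (j + 2) * ln 2) powr - s"
      by (simp add: powr_mult)
    also have "\<dots> \<le> ln (2 ^ j + 2) powr - s"
      using assms ln_power_two_add_two_bounds[of j] ln_gt_zero[OF \<open>1 < 2 ^ j + 2\<close>]
      by (intro powr_mono2') simp_all
    finally show "norm (ln 2 powr - s * real (j + 2) powr - s) \<le> ln (2 ^ j + 2) powr - s"
      by simp
  qed
  then have "summable (\<lambda>j. real (j + 2) powr - s)"
    by simp
  then have "summable (\<lambda>n. real n powr - s)"
    using summable_iff_shift[of "\<lambda>n. real n powr - s" 2] by blast
  then show "s > 1"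
    using summable_real_powr_iff[of "- s"] by simp
next
  assume "s > 1"
  have "summable (\<lambda>j. ln 2 powr - s * real j powr - s)"
    using summable_real_powr_iff[of "- s"] \<open>s > 1\<close> by simp
  then show "summable (\<lambda>j. ln (2 ^ j + 2) powr - s)"
  proof (rule summable_comparison_test' [where N = 1])
    fix j :: nat assume "j \<ge> 1"
    have "ln (2 ^ j + 2) powr - s \<le> (real j * ln 2) powr - s"
      using assms ln_power_two_add_two_bounds(1)[of j] \<open>j \<ge> 1\<close> by (intro powr_mono2') simp_all
    also have "\<dots> = ln 2 powr - s * real j powr - s"
      by (simp add: powr_mult)
    finally show "norm (ln (2 ^ j + 2) powr - s) \<le> ln 2 powr - s * real j powr - s"
      by simp
  qed
qed

lemma summable_inverse_mult_ln_powr_iff: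
  fixes s :: real
  assumes "s \<ge> 0"
  shows "summable (\<lambda>n. 1 / (real n * ln (real n + 2) powr s)) \<longleftrightarrow> s > 1"
proof -
  define f where "f n = 1 / (real n * ln (real n + 2) powr s)" for n :: nat
  have "summable f \<longleftrightarrow> summable (\<lambda>j. 2 ^ j * f (2 ^ j))"
  proof (rule condensation_test)
    fix m :: nat assume "0 < m"
    then show "f (Suc m) \<le> f m"
      unfolding f_def using assms
      by (intro divide_left_mono mult_mono powr_mono2 mult_pos_pos) simp_all
  qed (simp add: f_def)
  also have "(\<lambda>j. 2 ^ j * f (2 ^ j)) = (\<lambda>j. ln (2 ^ j + 2) powr - s)"
    by (simp add: f_def powr_minus divide_simps)
  finally show ?thesis
    using summable_ln_power_two_add_two_powr_iff[OF assms] by (simp add: f_def)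
qed

lemma tendsto_infsum_inter_atLeast:
  fixes f :: "nat \<Rightarrow> real"
  assumes "f summable_on A"
  shows "(\<lambda>k. infsum f (A \<inter> {k..})) \<longlonglongrightarrow> 0"
proof -
  have tail: "infsum f (A \<inter> {k..}) = infsum f A - sum f (A \<inter> {..<k})" for k
  proof -
    have "A \<inter> {k..} = A - A \<inter> {..<k}"
      by auto
    then show ?thesis
      using infsum_Diff[OF assms, of "A \<inter> {..<k}"] by simp
  qed
  have "filterlim (\<lambda>k. A \<inter> {..<k}) (finite_subsets_at_top A) sequentially"
    unfolding filterlim_finite_subsets_at_top
  proof (intro allI impI)
    fix X assume "finite X \<and> X \<subseteq> A"
    then obtain n where "X \<subseteq> {..<n}"
      by (auto simp: finite_nat_set_iff_bounded)
    show "\<forall>\<^sub>F k in sequentially. finite (A \<inter> {..<k}) \<and> X \<subseteq> A \<inter> {..<k} \<and> A \<inter> {..<k} \<subseteq> A"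
      using eventually_ge_at_top[of n]
      by eventually_elim (use \<open>finite X \<and> X \<subseteq> A\<close> \<open>X \<subseteq> {..<n}\<close> in auto)
  qed
  with has_sum_infsum[OF assms] have "(\<lambda>k. sum f (A \<inter> {..<k})) \<longlonglongrightarrow> infsum f A"
    unfolding has_sum_def by (rule filterlim_compose)
  then have "(\<lambda>k. infsum f A - sum f (A \<inter> {..<k})) \<longlonglongrightarrow> infsum f A - infsum f A"
    by (intro tendsto_diff tendsto_const)
  then show ?thesis
    by (simp add: tail)
qed

section \<open>Sums over the sets \<open>P_k\<close>\<close>

lemma summable_on_prime_level_set_iff:
  "f summable_on prime_level_set k \<longleftrightarrow> (\<lambda>n. f (iter_prime k n)) summable_on {1..}"
  unfolding prime_level_set_def by (subst summable_on_reindex[OF inj_on_iter_prime]) (simp add: o_def)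

lemma prime_level_set_antimono:
  assumes "j \<le> k"
  shows "prime_level_set k \<subseteq> prime_level_set j"
proof
  fix p assume "p \<in> prime_level_set k"
  then obtain n where "1 \<le> n" "p = iter_prime k n"
    by (auto simp: prime_level_set_def)
  then have "p = iter_prime j (iter_prime (k - j) n)"
    using iter_prime_add[of j "k - j" n] assms by simp
  moreover have "1 \<le> iter_prime (k - j) n"
    using iter_prime_ge[of n "k - j"] \<open>1 \<le> n\<close> by simp
  ultimately show "p \<in> prime_level_set j"
    by (auto simp: prime_level_set_def)
qed

lemma prime_level_set_subset_atLeast: "prime_level_set k \<subseteq> {Suc k..}"
proof
  fix p assume "p \<in> prime_level_set k"
  then obtain n where "1 \<le> n" "p = iter_prime k n"
    by (auto simp: prime_level_set_def)
  then show "p \<in> {Suc k..}"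
    using iter_prime_ge[of n k] by simp
qed

lemma powr_summable_on_prime_level_set_gt_1:
  assumes "a > 1"
  shows "(\<lambda>p. real p powr - a) summable_on prime_level_set k"
proof -
  have "(\<lambda>p. real p powr - a) summable_on UNIV"
    using summable_real_powr_iff[of "- a"] assms by (subst summable_on_UNIV_nonneg_real_iff) auto
  then show ?thesis
    by (rule summable_on_subset_banach) simp
qed

lemma inverse_summable_on_prime_level_set_2:
  "(\<lambda>p. real p powr - 1) summable_on prime_level_set 2"
  unfolding summable_on_prime_level_set_iff
proof (rule summable_on_comparison_test)
  define g where "g n = (12 * ln 4) ^ 2 * (1 / (real n * ln (real n + 2) powr 2))" for n :: nat
  have "summable (\<lambda>n. 1 / (real n * ln (real n + 2) powr 2))"
    using summable_inverse_mult_ln_powr_iff[of 2] by simp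
  then have "summable g"
    unfolding g_def by (rule summable_mult)
  then show "g summable_on {1..}"
    by (subst summable_on_atLeast_1_iff) (simp_all add: g_def)
  fix n :: nat assume "n \<in> {1..}"
  then have "real n * ln (real n + 2) powr 2 \<le> (12 * ln 4) ^ 2 * real (iter_prime 2 n)"
    using iter_prime_two_lower_bound[of n] by (simp add: powr_numeral)
  moreover have "real n * ln (real n + 2) powr 2 > 0" "real (iter_prime 2 n) > 0"
    using \<open>n \<in> {1..}\<close> iter_prime_ge[of n 2] by simp_all
  ultimately show "real (iter_prime 2 n) powr - 1 \<le> g n"
    by (simp add: g_def powr_minus field_simps)
qed simp

lemma not_inverse_summable_on_prime_level_set_1:
  "\<not> (\<lambda>p. real p powr - 1) summable_on prime_level_set 1"
proof
  assume "(\<lambda>p. real p powr - 1) summable_on prime_level_set 1"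
  then have summable: "(\<lambda>n. real (nth_prime n) powr - 1) summable_on {1..}"
    by (simp add: summable_on_prime_level_set_iff)
  obtain C where C: "C > 0" "\<And>n. n \<ge> 1 \<Longrightarrow> real (nth_prime n) \<le> C * real n * ln (real n + 2)"
    using nth_prime_upper_bound by blast
  have "(\<lambda>n. 1 / C * (1 / (real n * ln (real n + 2) powr 1))) summable_on {1..}"
  proof (rule summable_on_comparison_test [OF summable])
    fix n :: nat assume "n \<in> {1..}"
    then have "0 < C * real n * ln (real n + 2)" "0 < nth_prime n"
      using C(1) prime_gt_0_nat[OF prime_nth_prime] by simp_all
    with C(2)[of n] \<open>n \<in> {1..}\<close>
    show "1 / C * (1 / (real n * ln (real n + 2) powr 1)) \<le> real (nth_prime n) powr - 1"
      by (simp add: powr_minus divide_simps)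
  qed (use C(1) in simp)
  then have "summable (\<lambda>n. 1 / C * (1 / (real n * ln (real n + 2) powr 1)))"
    using C(1) by (subst (asm) summable_on_atLeast_1_iff) simp_all
  then have "summable (\<lambda>n. C * (1 / C * (1 / (real n * ln (real n + 2) powr 1))))"
    by (rule summable_mult)
  then show False
    using summable_inverse_mult_ln_powr_iff[of 1] C(1) by simp
qed

lemma not_powr_summable_on_prime_level_set_lt_1:
  assumes "0 \<le> a" "a < 1"
  shows "\<not> (\<lambda>p. real p powr - a) summable_on prime_level_set k"
proof
  assume "(\<lambda>p. real p powr - a) summable_on prime_level_set k"
  then have summable: "(\<lambda>n. real (iter_prime k n) powr - a) summable_on {1..}"
    by (simp add: summable_on_prime_level_set_iff)
  define g where "g = 2 / (1 + a)"
  have "g > 1" "g * a \<le> 1"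
    using assms by (simp_all add: g_def field_simps)
  obtain C where C: "C > 0" "\<And>n. n \<ge> 1 \<Longrightarrow> real (iter_prime k n) \<le> C * real n powr g"
    using iter_prime_le_powr[OF \<open>g > 1\<close>] by blast
  have "(\<lambda>n. C powr - a * real n powr - (g * a)) summable_on {1..}"
  proof (rule summable_on_comparison_test [OF summable])
    fix n :: nat assume "n \<in> {1..}"
    then have "0 < real (iter_prime k n)"
      using iter_prime_ge[of n k] by simp
    have "C powr - a * real n powr - (g * a) = (C * real n powr g) powr - a"
      using C(1) by (simp add: powr_mult powr_powr)
    also have "\<dots> \<le> real (iter_prime k n) powr - a"
      using C(2)[of n] \<open>n \<in> {1..}\<close> \<open>0 < real (iter_prime k n)\<close> assms(1)
      by (intro powr_mono2') simp_all
    finally show "C powr - a * real n powr - (g * a) \<le> real (iter_prime k n) powr - a" .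
  qed simp
  then have "summable (\<lambda>n. C powr - a * real n powr - (g * a))"
    by (subst (asm) summable_on_atLeast_1_iff) simp_all
  then show False
    using summable_real_powr_iff[of "- (g * a)"] \<open>g * a \<le> 1\<close> C(1) by simp
qed

lemma powr_summable_on_prime_level_set_iff:
  assumes "a \<ge> 0"
  shows "(\<lambda>p. real p powr - a) summable_on prime_level_set k \<longleftrightarrow> a > 1 \<or> (a = 1 \<and> k \<ge> 2)"
proof -
  consider "a > 1" | "a < 1" | "a = 1" "k \<ge> 2" | "a = 1" "k \<le> 1"
    by linarith
  then show ?thesis
  proof cases
    case 1
    then show ?thesis
      using powr_summable_on_prime_level_set_gt_1 by simp
  next
    case 2
    then show ?thesis
      using not_powr_summable_on_prime_level_set_lt_1 assms by simp
  next
    case 3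
    then show ?thesis
      using summable_on_subset_banach[OF inverse_summable_on_prime_level_set_2
          prime_level_set_antimono] by simp
  next
    case 4
    then show ?thesis
      using not_inverse_summable_on_prime_level_set_1
        summable_on_subset_banach[OF _ prime_level_set_antimono[of k 1]] by auto
  qed
qed

lemma infsum_powr_prime_level_set_le_tail:
  assumes "1 \<le> a" "2 \<le> k"
  shows "infsum (\<lambda>p. real p powr - a) (prime_level_set k)
           \<le> infsum (\<lambda>p. real p powr - 1) (prime_level_set 2 \<inter> {k..})"
proof -
  have level: "prime_level_set k \<subseteq> prime_level_set 2 \<inter> {k..}"
    using prime_level_set_antimono[OF assms(2)] prime_level_set_subset_atLeast[of k] by auto
  have summable: "(\<lambda>p. real p powr - 1) summable_on prime_level_set 2 \<inter> {k..}"
    using inverse_summable_on_prime_level_set_2 by (rule summable_on_subset_banach) simp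
  have "infsum (\<lambda>p. real p powr - a) (prime_level_set k)
      \<le> infsum (\<lambda>p. real p powr - 1) (prime_level_set k)"
  proof (rule infsum_mono)
    show "(\<lambda>p. real p powr - a) summable_on prime_level_set k"
         "(\<lambda>p. real p powr - 1) summable_on prime_level_set k"
      using powr_summable_on_prime_level_set_iff[of a k] powr_summable_on_prime_level_set_iff[of 1 k]
        assms by auto
    fix p assume "p \<in> prime_level_set k"
    then have "1 \<le> p"
      using prime_level_set_subset_atLeast by fastforce
    then show "real p powr - a \<le> real p powr - 1"
      using assms(1) by (intro powr_mono) simp_all
  qed
  also have "\<dots> \<le> infsum (\<lambda>p. real p powr - 1) (prime_level_set 2 \<inter> {k..})"
    using summable_on_subset_banach[OF summable level] summable level by (rule infsum_mono2) simp
  finally show ?thesis .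
qed

lemma tendsto_infsum_powr_prime_level_set:
  assumes "a \<ge> 1"
  shows "(\<lambda>k. infsum (\<lambda>p. real p powr - a) (prime_level_set k)) \<longlonglongrightarrow> 0"
proof (rule tendsto_sandwich[of "\<lambda>_. 0" _ _
      "\<lambda>k. infsum (\<lambda>p. real p powr - 1) (prime_level_set 2 \<inter> {k..})"])
  show "\<forall>\<^sub>F k in sequentially. 0 \<le> infsum (\<lambda>p. real p powr - a) (prime_level_set k)"
    by (intro always_eventually allI infsum_nonneg) simp
  show "\<forall>\<^sub>F k in sequentially. infsum (\<lambda>p. real p powr - a) (prime_level_set k)
          \<le> infsum (\<lambda>p. real p powr - 1) (prime_level_set 2 \<inter> {k..})"
    using eventually_ge_at_top[of 2]
    by eventually_elim (rule infsum_powr_prime_level_set_le_tail[OF assms])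
  show "(\<lambda>k. infsum (\<lambda>p. real p powr - 1) (prime_level_set 2 \<inter> {k..})) \<longlonglongrightarrow> 0"
    using inverse_summable_on_prime_level_set_2 by (rule tendsto_infsum_inter_atLeast)
qed simp

theorem theorem3:
  shows "(\<forall>(k::nat) (\<alpha>::real). \<alpha> \<ge> 0 \<longrightarrow>
            ((\<lambda>p. real p powr (-\<alpha>)) summable_on prime_level_set k
               \<longleftrightarrow> (\<alpha> > 1 \<or> (\<alpha> = 1 \<and> k \<ge> 2))))
       \<and> (\<forall>\<alpha>::real. \<alpha> \<ge> 1 \<longrightarrow>
            (\<lambda>k. infsum (\<lambda>p. real p powr (-\<alpha>)) (prime_level_set k)) \<longlonglongrightarrow> 0)"
  using powr_summable_on_prime_level_set_iff tendsto_infsum_powr_prime_level_set by blast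

end
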